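(* Let $U$ be the bilateral shift $(Ug)(n)=g(n-1)$ on $\ell^2(\mathbb Z)$. For every $h\in\mathbb N$, \[(U+U^* )^h=\sum_{k=0}^{\lfloor h/2\rfloor}\alpha_{h,k}\sum_{\substack{\ell,m\ge0\\ \ell+m=h-2k}}U^m(U^* )^\ell,\qquad\alpha_{h,k}:=\binom hk-\binom h{k-1}.\]
   Context: $\mathbb N=\{0,1,2,\dots\}$; convention $\binom h{-1}=0$. *)

theory Defs
  imports "HOL-Analysis.Analysis"
begin

definition ell2Z :: "(int \<Rightarrow> complex) set" where
  "ell2Z = {g. (\<lambda>n. (norm (g n))^2) summable_on UNIV}"

definition shiftU :: "(int \<Rightarrow> complex) \<Rightarrow> (int \<Rightarrow> complex)" where
  "shiftU g = (\<lambda>n. g (n - 1))"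

text \<open>Its Hilbert-space adjoint, the backward shift (U* g)(n) = g(n+1).\<close>
definition shiftUadj :: "(int \<Rightarrow> complex) \<Rightarrow> (int \<Rightarrow> complex)" where
  "shiftUadj g = (\<lambda>n. g (n + 1))"

definition alpha :: "nat \<Rightarrow> nat \<Rightarrow> int" where
  "alpha h k = int (h choose k) - (if k = 0 then 0 else int (h choose (k - 1)))"

end

theory Submission
  imports Defs
begin

text \<open>Applied to g, the operator U + U* acts as the symmetric translation, so (U + U*)^h g at n is
  the binomial sum of the values g (n + h - 2 i), weighted by C(h, i). Every word U^m U*^l with
  l + m = h - 2k evaluates g at n + h - 2(k + m), so the right-hand side is again such a sum, in
  which g (n + h - 2 i) carries the weight alpha(h, k) summed over k \<le> min i (h - i). That sum
  telescopes to C(h, min i (h - i)) = C(h, i). The identity is pointwise.\<close>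

lemma funpow_shiftU: "(shiftU ^^ m) f = (\<lambda>n. f (n - int m))"
  by (induction m arbitrary: f) (auto simp: shiftU_def algebra_simps)

lemma funpow_shiftUadj: "(shiftUadj ^^ m) f = (\<lambda>n. f (n + int m))"
  by (induction m arbitrary: f) (auto simp: shiftUadj_def algebra_simps)

lemma funpow_shiftU_plus_shiftUadj:
  "((\<lambda>f n. shiftU f n + shiftUadj f n) ^^ h) g =
     (\<lambda>n. \<Sum>i\<le>h. of_nat (h choose i) * g (n + int h - 2 * int i))"
proof (induction h arbitrary: g)
  case 0
  then show ?case by simp
next
  case (Suc h)
  let ?S = "\<lambda>f n. shiftU f n + shiftUadj f n"
  show ?case
  proof
    fix n
    let ?low = "\<lambda>c. \<Sum>i\<le>h. of_nat (c i) * g (n + int h - 2 * int i - 1)"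
    have upper: "(\<Sum>i\<le>h. of_nat (h choose i) * g (n + int h - 2 * int i + 1))
        = g (n + int h + 1) + ?low (\<lambda>i. h choose Suc i)"
    proof -
      have "(\<Sum>i\<le>h. of_nat (h choose i) * g (n + int h - 2 * int i + 1))
          = (\<Sum>i\<le>Suc h. of_nat (h choose i) * g (n + int h - 2 * int i + 1))"
        by simp
      then show ?thesis
        by (subst (asm) sum.atMost_Suc_shift) (simp add: algebra_simps)
    qed
    have "(?S ^^ Suc h) g n = (?S ^^ h) (?S g) n"
      by (simp add: funpow_Suc_right del: funpow.simps)
    also have "\<dots> = ?low (\<lambda>i. h choose i)
        + (\<Sum>i\<le>h. of_nat (h choose i) * g (n + int h - 2 * int i + 1))"
      unfolding Suc.IH
      by (simp add: shiftU_def shiftUadj_def distrib_left sum.distrib algebra_simps)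
    also have "\<dots> = g (n + int h + 1) + ?low (\<lambda>i. Suc h choose Suc i)"
      unfolding upper by (simp add: sum.distrib distrib_right)
    also have "\<dots> = (\<Sum>i\<le>Suc h. of_nat (Suc h choose i) * g (n + int (Suc h) - 2 * int i))"
      by (subst sum.atMost_Suc_shift) (simp add: algebra_simps)
    finally show "(?S ^^ Suc h) g n = \<dots>" .
  qed
qed

lemma sum_alpha_atMost: "(\<Sum>k\<le>r. alpha h k) = int (h choose r)"
  by (induction r) (auto simp: alpha_def)

lemma sum_antidiagonal_shift_words:
  "(\<Sum>(l, m)\<in>{(l, m). l + m = j}. ((shiftU ^^ m) ((shiftUadj ^^ l) g)) n)
     = (\<Sum>m\<le>j. g (n + int j - 2 * int m))"
  by (rule sum.reindex_bij_witness[where i="\<lambda>m. (j - m, m)" and j=snd])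
     (auto simp: funpow_shiftU funpow_shiftUadj algebra_simps of_nat_diff)

lemma binomial_sum_eq_alpha_sum:
  fixes x :: "nat \<Rightarrow> 'a :: comm_ring_1"
  shows "(\<Sum>k\<in>{0..h div 2}. of_int (alpha h k) * (\<Sum>m\<le>h - 2 * k. x (k + m)))
       = (\<Sum>i\<le>h. of_nat (h choose i) * x i)"
proof -
  have "(\<Sum>k\<in>{0..h div 2}. of_int (alpha h k) * (\<Sum>m\<le>h - 2 * k. x (k + m)))
      = (\<Sum>(k, m)\<in>Sigma {0..h div 2} (\<lambda>k. {..h - 2 * k}). of_int (alpha h k) * x (k + m))"
    by (simp add: sum.Sigma[symmetric] sum_distrib_left)
  also have "\<dots> = (\<Sum>(i, k)\<in>Sigma {..h} (\<lambda>i. {..min i (h - i)}). of_int (alpha h k) * x i)"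
    by (rule sum.reindex_bij_witness[where i="\<lambda>(i, k). (k, i - k)" and j="\<lambda>(k, m). (k + m, k)"])
       auto
  also have "\<dots> = (\<Sum>i\<le>h. of_int (\<Sum>k\<le>min i (h - i). alpha h k) * x i)"
    by (simp add: sum.Sigma[symmetric] sum_distrib_right)
  also have "\<dots> = (\<Sum>i\<le>h. of_nat (h choose i) * x i)"
  proof (rule sum.cong[OF refl])
    fix i
    assume "i \<in> {..h}"
    then have "h choose min i (h - i) = h choose i"
      by (auto simp: min_def binomial_symmetric[symmetric])
    then show "of_int (\<Sum>k\<le>min i (h - i). alpha h k) * x i = of_nat (h choose i) * x i"
      by (simp add: sum_alpha_atMost)
  qed
  finally show ?thesis .
qed

theorem corollary3p3:
  fixes h :: nat and g :: "int \<Rightarrow> complex"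
  assumes "g \<in> ell2Z"
  shows "((\<lambda>f. (\<lambda>n. shiftU f n + shiftUadj f n)) ^^ h) g =
    (\<lambda>n. \<Sum>k\<in>{0..h div 2}. of_int (alpha h k) *
          (\<Sum>(l, m)\<in>{(l, m). l + m = h - 2 * k}. ((shiftU ^^ m) ((shiftUadj ^^ l) g)) n))"
proof
  fix n
  define x where "x i = g (n + int h - 2 * int i)" for i
  have words: "(\<Sum>(l, m)\<in>{(l, m). l + m = h - 2 * k}. ((shiftU ^^ m) ((shiftUadj ^^ l) g)) n)
      = (\<Sum>m\<le>h - 2 * k. x (k + m))" if "k \<in> {0..h div 2}" for k
    using that by (simp add: sum_antidiagonal_shift_words x_def of_nat_diff algebra_simps)
  have "((\<lambda>f. (\<lambda>n. shiftU f n + shiftUadj f n)) ^^ h) g n = (\<Sum>i\<le>h. of_nat (h choose i) * x i)"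
    by (simp add: funpow_shiftU_plus_shiftUadj x_def)
  also have "\<dots> = (\<Sum>k\<in>{0..h div 2}. of_int (alpha h k) * (\<Sum>m\<le>h - 2 * k. x (k + m)))"
    by (rule binomial_sum_eq_alpha_sum[symmetric])
  also have "\<dots> = (\<Sum>k\<in>{0..h div 2}. of_int (alpha h k) *
          (\<Sum>(l, m)\<in>{(l, m). l + m = h - 2 * k}. ((shiftU ^^ m) ((shiftUadj ^^ l) g)) n))"
    by (simp add: words)
  finally show "((\<lambda>f. (\<lambda>n. shiftU f n + shiftUadj f n)) ^^ h) g n = \<dots>" .
qed

end
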